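(* Let $g\colon A\to D$ and $h\colon B\to D$ be lattice epimorphisms, where $A$ and $B$ are lattices with top and bottom elements $0_A,1_A,0_B,1_B$. If the fiber product $\{(a,b)\in A\times B: g(a)=h(b)\}$ is generated as a lattice by a set $G$, then $\{(a,b)\in A\times B: g(a)\le h(b)\}$ is generated as a lattice by $G\cup\{(0_A,1_B)\}$. In particular, if the fiber product is finitely generated, so is the latter sublattice. *)

theory Defs
  imports Main "HOL-Library.Product_Order"
begin

definition lattice_hom :: "('a::lattice \<Rightarrow> 'b::lattice) \<Rightarrow> bool" where
  "lattice_hom f \<longleftrightarrow> (\<forall>x y. f (sup x y) = sup (f x) (f y) \<and> f (inf x y) = inf (f x) (f y))"

definition lattice_epi :: "('a::lattice \<Rightarrow> 'b::lattice) \<Rightarrow> bool" where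
  "lattice_epi f \<longleftrightarrow> lattice_hom f \<and> surj f"

inductive_set lat_gen :: "'a::lattice set \<Rightarrow> 'a set" for G where
  base: "x \<in> G \<Longrightarrow> x \<in> lat_gen G"
| sup_closed: "x \<in> lat_gen G \<Longrightarrow> y \<in> lat_gen G \<Longrightarrow> sup x y \<in> lat_gen G"
| inf_closed: "x \<in> lat_gen G \<Longrightarrow> y \<in> lat_gen G \<Longrightarrow> inf x y \<in> lat_gen G"

end

theory Submission
  imports Defs
begin

text \<open>The relation \<open>g a \<le> h b\<close> is a sublattice of \<open>A \<times> B\<close> containing the fiber product and
  \<open>(0, 1)\<close>. Conversely, given \<open>g a \<le> h b\<close>, surjectivity yields \<open>b'\<close> and \<open>a'\<close> with
  \<open>g a = h b'\<close> and \<open>g a' = h b\<close>; then \<open>(a, b')\<close> and \<open>(a \<squnion> a', b)\<close> lie in the fiber product and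
  \<open>(a, b) = ((a, b') \<squnion> (0, 1)) \<sqinter> (a \<squnion> a', b)\<close>.\<close>

lemma lattice_hom_mono:
  assumes "lattice_hom f" and "x \<le> y"
  shows "f x \<le> f y"
  by (metis assms lattice_hom_def sup.absorb_iff2)

lemma lattice_epi_bot_least:
  fixes g :: "'a::bounded_lattice \<Rightarrow> 'd::lattice"
  assumes "lattice_epi g"
  shows "g bot \<le> d"
proof -
  obtain x where "d = g x"
    using assms unfolding lattice_epi_def by blast
  then show ?thesis
    using assms lattice_hom_mono[of g bot x] unfolding lattice_epi_def by simp
qed

lemma lat_gen_least:
  assumes "G \<subseteq> S"
    and "\<And>x y. x \<in> S \<Longrightarrow> y \<in> S \<Longrightarrow> sup x y \<in> S"
    and "\<And>x y. x \<in> S \<Longrightarrow> y \<in> S \<Longrightarrow> inf x y \<in> S"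
  shows "lat_gen G \<subseteq> S"
proof
  fix x assume "x \<in> lat_gen G"
  then show "x \<in> S"
    by induction (use assms in auto)
qed

lemma lat_gen_mono:
  assumes "G \<subseteq> H"
  shows "lat_gen G \<subseteq> lat_gen H"
  using assms by (intro lat_gen_least) (auto intro: lat_gen.intros)

lemma lattice_hom_le_sup_inf:
  assumes "lattice_hom g" and "lattice_hom h"
    and "g a \<le> h b" and "g a' \<le> h b'"
  shows "g (sup a a') \<le> h (sup b b')" and "g (inf a a') \<le> h (inf b b')"
  using assms unfolding lattice_hom_def
  by (auto intro: le_supI1 le_supI2 le_infI1 le_infI2)

lemma lat_gen_fiber_le_subset:
  fixes g :: "'a::bounded_lattice \<Rightarrow> 'd::lattice"
    and h :: "'b::bounded_lattice \<Rightarrow> 'd"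
  assumes "lattice_epi g" and "lattice_hom h"
    and "G \<subseteq> {(a, b). g a \<le> h b}"
  shows "lat_gen (G \<union> {(bot, top)}) \<subseteq> {(a, b). g a \<le> h b}"
proof (rule lat_gen_least)
  have "lattice_hom g"
    using assms(1) unfolding lattice_epi_def by simp
  then show "\<And>x y. x \<in> {(a, b). g a \<le> h b} \<Longrightarrow> y \<in> {(a, b). g a \<le> h b}
      \<Longrightarrow> sup x y \<in> {(a, b). g a \<le> h b}"
    and "\<And>x y. x \<in> {(a, b). g a \<le> h b} \<Longrightarrow> y \<in> {(a, b). g a \<le> h b}
      \<Longrightarrow> inf x y \<in> {(a, b). g a \<le> h b}"
    using assms(2) lattice_hom_le_sup_inf by (auto simp: sup_prod_def inf_prod_def)
  show "G \<union> {(bot, top)} \<subseteq> {(a, b). g a \<le> h b}"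
    using assms(1,3) lattice_epi_bot_least by auto
qed

lemma fiber_le_in_lat_gen:
  fixes g :: "'a::bounded_lattice \<Rightarrow> 'd::lattice"
    and h :: "'b::bounded_lattice \<Rightarrow> 'd"
  assumes "lattice_epi g" and "lattice_epi h" and "g a \<le> h b"
  shows "(a, b) \<in> lat_gen ({(a, b). g a = h b} \<union> {(bot, top)})"
proof -
  let ?L = "lat_gen ({(a, b). g a = h b} \<union> {(bot, top)})"
  obtain b' where b': "g a = h b'"
    using assms(2) unfolding lattice_epi_def by (metis surjD)
  obtain a' where a': "h b = g a'"
    using assms(1) unfolding lattice_epi_def by (metis surjD)
  have "g (sup a a') = h b"
    using assms(1,3) a' unfolding lattice_epi_def lattice_hom_def by (simp add: sup.absorb2)
  then have "inf (sup (a, b') (bot, top)) (sup a a', b) \<in> ?L"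
    using b' by (intro lat_gen.intros) auto
  moreover have "inf (sup (a, b') (bot, top)) (sup a a', b) = (a, b)"
    by (simp add: sup_Pair_Pair inf_Pair_Pair inf.absorb1)
  ultimately show ?thesis
    by simp
qed

lemma lat_gen_fiber_le:
  fixes g :: "'a::bounded_lattice \<Rightarrow> 'd::lattice"
    and h :: "'b::bounded_lattice \<Rightarrow> 'd"
  assumes "lattice_epi g" and "lattice_epi h"
    and gen: "lat_gen G = {(a, b). g a = h b}"
  shows "lat_gen (G \<union> {(bot, top)}) = {(a, b). g a \<le> h b}"
proof
  have "G \<subseteq> {(a, b). g a \<le> h b}"
    using gen lat_gen.base by fastforce
  then show "lat_gen (G \<union> {(bot, top)}) \<subseteq> {(a, b). g a \<le> h b}"
    using assms(1,2) lat_gen_fiber_le_subset unfolding lattice_epi_def by blast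
  have "{(a, b). g a = h b} \<union> {(bot, top)} \<subseteq> lat_gen (G \<union> {(bot, top)})"
    using gen lat_gen_mono[of G "G \<union> {(bot, top)}"] by (auto intro: lat_gen.base)
  then have "lat_gen ({(a, b). g a = h b} \<union> {(bot, top)}) \<subseteq> lat_gen (G \<union> {(bot, top)})"
    by (intro lat_gen_least) (auto intro: lat_gen.intros)
  then show "{(a, b). g a \<le> h b} \<subseteq> lat_gen (G \<union> {(bot, top)})"
    using fiber_le_in_lat_gen[OF assms(1,2)] by blast
qed

theorem mainTheorem8:
  fixes g :: "'a::bounded_lattice \<Rightarrow> 'd::lattice"
    and h :: "'b::bounded_lattice \<Rightarrow> 'd"
    and G :: "('a \<times> 'b) set"
  assumes "lattice_epi g" and "lattice_epi h"
    and "lat_gen G = {(a, b). g a = h b}"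
  shows "lat_gen (G \<union> {(bot, top)}) = {(a, b). g a \<le> h b}
    \<and> ((\<exists>G0. finite G0 \<and> lat_gen G0 = {(a, b). g a = h b})
        \<longrightarrow> (\<exists>G1. finite G1 \<and> lat_gen G1 = {(a, b). g a \<le> h b}))"
proof (intro conjI impI)
  show "lat_gen (G \<union> {(bot, top)}) = {(a, b). g a \<le> h b}"
    using lat_gen_fiber_le[OF assms] .
  assume "\<exists>G0. finite G0 \<and> lat_gen G0 = {(a, b). g a = h b}"
  then obtain G0 where "finite G0" and "lat_gen G0 = {(a, b). g a = h b}"
    by blast
  then show "\<exists>G1. finite G1 \<and> lat_gen G1 = {(a, b). g a \<le> h b}"
    using lat_gen_fiber_le[OF assms(1,2), of G0] by (intro exI[of _ "G0 \<union> {(bot, top)}"]) auto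
qed

end
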